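(* Let $\mathfrak g$ be a finite-dimensional complex simple Lie algebra, $\lambda\in P^+$, and $\boldsymbol\lambda=(\lambda_1,\lambda_2),\boldsymbol\mu=(\mu_1,\mu_2)\in P^+(\lambda,2)$. Then $\boldsymbol\lambda\sim\boldsymbol\mu$ if and only if $\boldsymbol\mu\in\{(\lambda_1,\lambda_2),(\lambda_2,\lambda_1)\}$.
   Context: $\mathfrak g$ has positive roots $R^+$, coroots $h_\alpha$, dominant integral weights $P^+$. $P^+(\lambda,2)=\{(\lambda_1,\lambda_2)\in(P^+)^2:\lambda_1+\lambda_2=\lambda\}$; $(\lambda_1,\lambda_2)\sim(\mu_1,\mu_2)$ means $\min\{\lambda_1(h_\alpha),\lambda_2(h_\alpha)\}=\min\{\mu_1(h_\alpha),\mu_2(h_\alpha)\}$ for all $\alpha\in R^+$. *)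

theory Defs
  imports "HOL-Analysis.Analysis"
begin

text \<open>A complex simple Lie algebra is represented by its root system: a finite, reduced,
crystallographic, irreducible root system in a real Euclidean space (the real span of the
roots in the dual of a Cartan subalgebra).  Weights are vectors of that space; the value
of a weight on the coroot h_alpha is the Cartan pairing 2 (x, alpha) / (alpha, alpha).\<close>

definition coroot_pairing :: "'a::real_inner \<Rightarrow> 'a \<Rightarrow> real" where
  "coroot_pairing x \<alpha> = 2 * (x \<bullet> \<alpha>) / (\<alpha> \<bullet> \<alpha>)"

definition root_reflection :: "'a::real_inner \<Rightarrow> 'a \<Rightarrow> 'a" where
  "root_reflection \<alpha> x = x - coroot_pairing x \<alpha> *\<^sub>R \<alpha>"

definition root_system :: "'a::euclidean_space set \<Rightarrow> bool" where
  "root_system R \<longleftrightarrow>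
     finite R \<and> 0 \<notin> R \<and> span R = UNIV \<and>
     (\<forall>\<alpha>\<in>R. \<forall>\<beta>\<in>R. root_reflection \<alpha> \<beta> \<in> R) \<and>
     (\<forall>\<alpha>\<in>R. \<forall>\<beta>\<in>R. coroot_pairing \<beta> \<alpha> \<in> \<int>) \<and>
     (\<forall>\<alpha>\<in>R. \<forall>c. c *\<^sub>R \<alpha> \<in> R \<longrightarrow> c = 1 \<or> c = -1)"

definition irreducible_root_system :: "'a::euclidean_space set \<Rightarrow> bool" where
  "irreducible_root_system R \<longleftrightarrow> R \<noteq> {} \<and>
     \<not> (\<exists>R1 R2. R1 \<union> R2 = R \<and> R1 \<noteq> {} \<and> R2 \<noteq> {} \<and>
            (\<forall>\<alpha>\<in>R1. \<forall>\<beta>\<in>R2. \<alpha> \<bullet> \<beta> = 0))"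

text \<open>A positive system is determined by a regular vector v (every positive system arises so).\<close>

definition regular_vector :: "'a::euclidean_space set \<Rightarrow> 'a \<Rightarrow> bool" where
  "regular_vector R v \<longleftrightarrow> (\<forall>\<alpha>\<in>R. v \<bullet> \<alpha> \<noteq> 0)"

definition pos_roots :: "'a::euclidean_space set \<Rightarrow> 'a \<Rightarrow> 'a set" where
  "pos_roots R v = {\<alpha>\<in>R. v \<bullet> \<alpha> > 0}"

definition dominant_weights :: "'a::euclidean_space set \<Rightarrow> 'a \<Rightarrow> 'a set" where
  "dominant_weights R v = {x. (\<forall>\<alpha>\<in>R. coroot_pairing x \<alpha> \<in> \<int>) \<and>
                              (\<forall>\<alpha>\<in>pos_roots R v. coroot_pairing x \<alpha> \<ge> 0)}"

definition P_plus_2 :: "'a::euclidean_space set \<Rightarrow> 'a \<Rightarrow> 'a \<Rightarrow> ('a \<times> 'a) set" where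
  "P_plus_2 R v lam = {(l1, l2). l1 \<in> dominant_weights R v \<and> l2 \<in> dominant_weights R v \<and>
                                 l1 + l2 = lam}"

definition min_equiv :: "'a::euclidean_space set \<Rightarrow> 'a \<Rightarrow> 'a \<times> 'a \<Rightarrow> 'a \<times> 'a \<Rightarrow> bool" where
  "min_equiv R v l m \<longleftrightarrow> (\<forall>\<alpha>\<in>pos_roots R v.
      min (coroot_pairing (fst l) \<alpha>) (coroot_pairing (snd l) \<alpha>) =
      min (coroot_pairing (fst m) \<alpha>) (coroot_pairing (snd m) \<alpha>))"

end

theory Submission
  imports Defs
begin

text \<open>
  Write d = l1 - l2 and e = m1 - m2.  Since l1 + l2 = m1 + m2, the minima of
  the pairings of (l1, l2) and of (m1, m2) with a root agree exactly when the pairing of e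
  is plus or minus that of d, i.e. when the root is orthogonal to e - d or to e + d.
  As every root is positive up to sign, the minimum condition therefore says that the
  root system is covered by the two hyperplanes orthogonal to e - d and e + d.

  Hence e = d or e = -d, which together with l1 + l2 = m1 + m2 gives the theorem.
\<close>

lemma coroot_pairing_add: "coroot_pairing (x + y) \<alpha> = coroot_pairing x \<alpha> + coroot_pairing y \<alpha>"
  by (simp add: coroot_pairing_def inner_add_left add_divide_distrib)

lemma coroot_pairing_diff: "coroot_pairing (x - y) \<alpha> = coroot_pairing x \<alpha> - coroot_pairing y \<alpha>"
  by (simp add: coroot_pairing_def inner_diff_left diff_divide_distrib)

text \<open>Since the pairing is the inner product up to the positive factor 2 / (alpha, alpha),
  equal (or opposite) pairings mean equal (or opposite) inner products.\<close>

lemma coroot_pairing_eq_iff: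
  assumes "\<alpha> \<noteq> 0"
  shows "coroot_pairing x \<alpha> = coroot_pairing y \<alpha> \<longleftrightarrow> x \<bullet> \<alpha> = y \<bullet> \<alpha>"
  using assms by (auto simp: coroot_pairing_def)

lemma coroot_pairing_eq_neg_iff:
  assumes "\<alpha> \<noteq> 0"
  shows "coroot_pairing x \<alpha> = - coroot_pairing y \<alpha> \<longleftrightarrow> x \<bullet> \<alpha> = - (y \<bullet> \<alpha>)"
  using assms by (auto simp: coroot_pairing_def field_simps)

lemma inner_root_reflection:
  "w \<bullet> root_reflection \<gamma> x = w \<bullet> x - coroot_pairing x \<gamma> * (w \<bullet> \<gamma>)"
  by (simp add: root_reflection_def inner_diff_right)

lemma inner_root_reflection_orth:
  "w \<bullet> \<gamma> = 0 \<Longrightarrow> w \<bullet> root_reflection \<gamma> x = w \<bullet> x"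
  by (simp add: inner_root_reflection)

lemma inner_root_reflection_nonzero:
  assumes "\<gamma> \<noteq> 0" "x \<bullet> \<gamma> \<noteq> 0" "w \<bullet> \<gamma> \<noteq> 0" "w \<bullet> x = 0"
  shows "w \<bullet> root_reflection \<gamma> x \<noteq> 0"
  using assms by (simp add: inner_root_reflection coroot_pairing_def)

lemma root_system_uminus:
  assumes "root_system R" "\<alpha> \<in> R"
  shows "- \<alpha> \<in> R"
proof -
  have "\<alpha> \<bullet> \<alpha> \<noteq> 0" using assms by (auto simp: root_system_def)
  hence "root_reflection \<alpha> \<alpha> = - \<alpha>"
    by (simp add: root_reflection_def coroot_pairing_def scaleR_2[symmetric] algebra_simps)
  thus ?thesis using assms by (metis root_system_def)
qed

lemma root_pos_or_neg:
  assumes "root_system R" "regular_vector R v" "\<alpha> \<in> R"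
  shows "\<alpha> \<in> pos_roots R v \<or> - \<alpha> \<in> pos_roots R v"
proof -
  have "v \<bullet> \<alpha> \<noteq> 0" using assms by (auto simp: regular_vector_def)
  thus ?thesis using assms root_system_uminus by (auto simp: pos_roots_def)
qed

lemma orthogonal_spanning_set_zero:
  fixes f :: "'a::euclidean_space"
  assumes "span R = UNIV" "\<forall>\<alpha>\<in>R. f \<bullet> \<alpha> = 0"
  shows "f = 0"
proof -
  have "orthogonal f f"
    by (rule orthogonal_to_span) (use assms in \<open>auto simp: orthogonal_def\<close>)
  thus ?thesis by (simp add: orthogonal_def)
qed

text \<open>If every root is orthogonal to f or to g, split R into R1 (roots off ker f),
  R2 (roots off ker g), Z (roots in both kernels meeting R2 non-orthogonally) and the
  rest.  Reflections show that R1 and the rest are orthogonal to R2 and Z, so by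
  irreducibility one of R1, R2 is empty, i.e. f or g vanishes on all roots.\<close>

lemma irreducible_not_two_hyperplanes:
  fixes R :: "'a::euclidean_space set" and f g :: 'a
  assumes rs: "root_system R" and irr: "irreducible_root_system R"
    and cover: "\<forall>\<alpha>\<in>R. f \<bullet> \<alpha> = 0 \<or> g \<bullet> \<alpha> = 0"
  shows "f = 0 \<or> g = 0"
proof (rule ccontr)
  assume "\<not> (f = 0 \<or> g = 0)"
  have nz: "\<gamma> \<noteq> 0" if "\<gamma> \<in> R" for \<gamma> using rs that by (auto simp: root_system_def)
  have refl: "root_reflection \<gamma> x \<in> R" if "\<gamma> \<in> R" "x \<in> R" for \<gamma> x
    using rs that by (auto simp: root_system_def)
  have span: "span R = UNIV" using rs by (simp add: root_system_def)
  define R1 where "R1 = {\<alpha>\<in>R. f \<bullet> \<alpha> \<noteq> 0}"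
  define R2 where "R2 = {\<alpha>\<in>R. g \<bullet> \<alpha> \<noteq> 0}"
  define Z where "Z = {\<gamma>\<in>R. f \<bullet> \<gamma> = 0 \<and> g \<bullet> \<gamma> = 0 \<and> (\<exists>\<beta>\<in>R2. \<gamma> \<bullet> \<beta> \<noteq> 0)}"
  define Rest where "Rest = R - R1 - R2 - Z"
  have "R1 \<noteq> {}" "R2 \<noteq> {}"
    using orthogonal_spanning_set_zero[OF span, of f] orthogonal_spanning_set_zero[OF span, of g]
      \<open>\<not> (f = 0 \<or> g = 0)\<close> by (auto simp: R1_def R2_def)
  have R1_R2: "\<alpha> \<bullet> \<beta> = 0" if "\<alpha> \<in> R1" "\<beta> \<in> R2" for \<alpha> \<beta>
  proof (rule ccontr)
    assume "\<alpha> \<bullet> \<beta> \<noteq> 0"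
    have "f \<bullet> \<beta> = 0" "g \<bullet> \<alpha> = 0" using cover that by (auto simp: R1_def R2_def)
    hence "f \<bullet> root_reflection \<beta> \<alpha> \<noteq> 0"
      using that by (simp add: inner_root_reflection_orth R1_def)
    moreover have "g \<bullet> root_reflection \<beta> \<alpha> \<noteq> 0"
      using inner_root_reflection_nonzero[of \<beta> \<alpha> g] \<open>\<alpha> \<bullet> \<beta> \<noteq> 0\<close> \<open>g \<bullet> \<alpha> = 0\<close> that nz
      by (auto simp: R2_def)
    ultimately show False using cover refl that by (auto simp: R1_def R2_def)
  qed
  have R1_Z: "\<alpha> \<bullet> \<gamma> = 0" if "\<alpha> \<in> R1" "\<gamma> \<in> Z" for \<alpha> \<gamma>
  proof (rule ccontr)
    assume "\<alpha> \<bullet> \<gamma> \<noteq> 0"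
    obtain \<beta> where "\<beta> \<in> R2" "\<gamma> \<bullet> \<beta> \<noteq> 0" using \<open>\<gamma> \<in> Z\<close> by (auto simp: Z_def)
    have "root_reflection \<gamma> \<alpha> \<in> R1"
      using that refl inner_root_reflection_orth[of f \<gamma> \<alpha>] by (auto simp: R1_def Z_def)
    moreover have "\<beta> \<bullet> root_reflection \<gamma> \<alpha> \<noteq> 0"
      using inner_root_reflection_nonzero[of \<gamma> \<alpha> \<beta>] \<open>\<alpha> \<bullet> \<gamma> \<noteq> 0\<close> \<open>\<gamma> \<bullet> \<beta> \<noteq> 0\<close>
        R1_R2[OF \<open>\<alpha> \<in> R1\<close> \<open>\<beta> \<in> R2\<close>] nz that
      by (auto simp: Z_def inner_commute)
    ultimately show False using R1_R2 \<open>\<beta> \<in> R2\<close> by (metis inner_commute)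
  qed
  have Rest_Z: "\<delta> \<bullet> \<gamma> = 0" if "\<delta> \<in> Rest" "\<gamma> \<in> Z" for \<delta> \<gamma>
  proof (rule ccontr)
    assume "\<delta> \<bullet> \<gamma> \<noteq> 0"
    have \<delta>_R2: "\<forall>\<beta>\<in>R2. \<delta> \<bullet> \<beta> = 0" using \<open>\<delta> \<in> Rest\<close> by (auto simp: Rest_def Z_def R1_def R2_def)
    obtain \<beta> where "\<beta> \<in> R2" "\<gamma> \<bullet> \<beta> \<noteq> 0" using \<open>\<gamma> \<in> Z\<close> by (auto simp: Z_def)
    have "root_reflection \<gamma> \<beta> \<in> R2"
      using that \<open>\<beta> \<in> R2\<close> refl inner_root_reflection_orth[of g \<gamma> \<beta>] by (auto simp: R2_def Z_def)
    moreover have "\<delta> \<bullet> root_reflection \<gamma> \<beta> \<noteq> 0"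
      using inner_root_reflection_nonzero[of \<gamma> \<beta> \<delta>] \<open>\<delta> \<bullet> \<gamma> \<noteq> 0\<close> \<open>\<gamma> \<bullet> \<beta> \<noteq> 0\<close>
        \<delta>_R2 \<open>\<beta> \<in> R2\<close> nz that by (auto simp: Z_def inner_commute)
    ultimately show False using \<delta>_R2 by auto
  qed
  have Rest_R2: "\<delta> \<bullet> \<beta> = 0" if "\<delta> \<in> Rest" "\<beta> \<in> R2" for \<delta> \<beta>
    using that by (auto simp: Rest_def Z_def R1_def R2_def)
  have "(R1 \<union> Rest) \<union> (R2 \<union> Z) = R"
    by (auto simp: Rest_def R1_def R2_def Z_def)
  moreover have "\<forall>\<alpha>\<in>R1 \<union> Rest. \<forall>\<beta>\<in>R2 \<union> Z. \<alpha> \<bullet> \<beta> = 0"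
    using R1_R2 R1_Z Rest_Z Rest_R2 by blast
  ultimately show False
    using irr \<open>R1 \<noteq> {}\<close> \<open>R2 \<noteq> {}\<close> unfolding irreducible_root_system_def by blast
qed

lemma min_eq_same_sum:
  fixes a1 a2 b1 b2 :: real
  assumes "a1 + a2 = b1 + b2" "min a1 a2 = min b1 b2"
  shows "b1 - b2 = a1 - a2 \<or> b1 - b2 = - (a1 - a2)"
  using assms by (auto simp: min_def split: if_splits)

lemma pair_eq_sum_diff:
  fixes l1 l2 m1 m2 :: "'a::real_vector"
  assumes "m1 + m2 = l1 + l2" "m1 - m2 = l1 - l2"
  shows "m1 = l1 \<and> m2 = l2"
proof -
  have "(2::real) *\<^sub>R m1 = (m1 + m2) + (m1 - m2)" by (simp add: scaleR_2)
  also have "\<dots> = (2::real) *\<^sub>R l1" using assms by (simp add: scaleR_2)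
  finally have "m1 = l1" by simp
  thus ?thesis using assms(1) by simp
qed

lemma min_equiv_root_orthogonal:
  assumes "min_equiv R v (l1, l2) (m1, m2)" "l1 + l2 = m1 + m2"
    and "\<beta> \<in> pos_roots R v" "\<beta> \<noteq> 0"
  shows "((m1 - m2) - (l1 - l2)) \<bullet> \<beta> = 0 \<or> ((m1 - m2) + (l1 - l2)) \<bullet> \<beta> = 0"
proof -
  have "coroot_pairing (m1 - m2) \<beta> = coroot_pairing (l1 - l2) \<beta> \<or>
        coroot_pairing (m1 - m2) \<beta> = - coroot_pairing (l1 - l2) \<beta>"
    unfolding coroot_pairing_diff
  proof (rule min_eq_same_sum)
    show "coroot_pairing l1 \<beta> + coroot_pairing l2 \<beta> = coroot_pairing m1 \<beta> + coroot_pairing m2 \<beta>"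
      using assms(2) by (metis coroot_pairing_add)
    show "min (coroot_pairing l1 \<beta>) (coroot_pairing l2 \<beta>) =
          min (coroot_pairing m1 \<beta>) (coroot_pairing m2 \<beta>)"
      using assms(1,3) by (auto simp: min_equiv_def)
  qed
  thus ?thesis using assms(4)
    by (auto simp: coroot_pairing_eq_iff coroot_pairing_eq_neg_iff inner_diff_left inner_add_left)
qed

theorem lemma5p5:
  fixes R :: "'a::euclidean_space set" and v lam l1 l2 m1 m2 :: 'a
  assumes "root_system R" and "irreducible_root_system R" and "regular_vector R v"
    and "lam \<in> dominant_weights R v"
    and "(l1, l2) \<in> P_plus_2 R v lam" and "(m1, m2) \<in> P_plus_2 R v lam"
  shows "min_equiv R v (l1, l2) (m1, m2) \<longleftrightarrow> (m1, m2) \<in> {(l1, l2), (l2, l1)}"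
proof
  assume "(m1, m2) \<in> {(l1, l2), (l2, l1)}"
  thus "min_equiv R v (l1, l2) (m1, m2)" by (auto simp: min_equiv_def min.commute)
next
  assume equiv: "min_equiv R v (l1, l2) (m1, m2)"
  have sum: "m1 + m2 = l1 + l2" using assms(5,6) by (auto simp: P_plus_2_def)
  let ?d = "l1 - l2" and ?e = "m1 - m2"
  have "((?e - ?d) \<bullet> \<alpha> = 0 \<or> (?e + ?d) \<bullet> \<alpha> = 0)" if "\<alpha> \<in> R" for \<alpha>
  proof -
    have "\<beta> \<noteq> 0" if "\<beta> \<in> R" for \<beta> using assms(1) that by (auto simp: root_system_def)
    thus ?thesis
      using root_pos_or_neg[OF assms(1,3) \<open>\<alpha> \<in> R\<close>] root_system_uminus[OF assms(1) \<open>\<alpha> \<in> R\<close>]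
        min_equiv_root_orthogonal[OF equiv sum[symmetric]] \<open>\<alpha> \<in> R\<close>
      by (fastforce simp: pos_roots_def)
  qed
  hence "?e - ?d = 0 \<or> ?e + ?d = 0"
    using irreducible_not_two_hyperplanes[OF assms(1,2)] by blast
  hence "?e = l1 - l2 \<or> ?e = l2 - l1" by (auto simp: algebra_simps)
  thus "(m1, m2) \<in> {(l1, l2), (l2, l1)}"
    using pair_eq_sum_diff[OF sum] pair_eq_sum_diff[of m1 m2 l2 l1] sum by (auto simp: add.commute)
qed

end
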